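(* Let $D$ be a Dyck path of semilength $n$ with column-area sequence $(c_1,\dots,c_{n+1})$, let $\mathcal D=\{k\in\{1,\dots,n\}: c_{k+1}=c_k-1\}$, and let $\pi$ be the permutation associated with $D$ by the Billey–Jockusch–Stanley bijection. Then $k\in\mathcal D$ if and only if $\pi(k)\le k$ (i.e. $k$ is a fixpoint or a deficiency of $\pi$).
   Context: Work in an $n\times n$ array of unit cells; the cell $(i,j)$ is the one in column $i$ (columns numbered $1,\dots,n$ from left to right) and row $j$ (rows numbered $1,\dots,n$ from bottom to top), i.e. the square $[i-1,i]\times[j-1,j]$. A Dyck path of semilength $n$ is a lattice path from $(0,0)$ to $(n,n)$ with unit north and east steps that never goes below the line $y=x$. Column-area sequence: for $1\le k\le n$, $c_k$ is the number of full cells in column $k$ strictly between the $k$-th east step of $D$ and the diagonal; equivalently, if the $k$-th east step lies at height $y_k$, then $c_k=y_k-k$; and $c_{n+1}=-1$. A valley of $D$ is an east step immediately followed by a north step; if the east step is the $k$-th east step and the north step is the $\ell$-th north step, the valley is at position $(k,\ell)$, the cell enclosed by these two steps. Billey–Jockusch–Stanley bijection: put a cross in every valley cell of $D$; then, for the columns $i=1,2,\dots,n$ in this order, if column $i$ does not yet contain a cross, put a cross in the lowest cell of column $i$ whose row does not yet contain a cross. The crosses form a permutation matrix, and $\pi(i)$ is the row of the cross in column $i$. An index $k$ is a fixpoint of $\pi$ if $\pi(k)=k$ and a deficiency if $\pi(k)<k$. *)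

theory Defs
  imports Main
begin

text \<open>A lattice path is encoded as a list of steps: True = north step, False = east step.\<close>

definition nN :: "bool list \<Rightarrow> nat" where
  "nN w = length (filter (\<lambda>s. s) w)"

definition nE :: "bool list \<Rightarrow> nat" where
  "nE w = length (filter (\<lambda>s. \<not> s) w)"

definition dyck :: "nat \<Rightarrow> bool list \<Rightarrow> bool" where
  "dyck n w \<longleftrightarrow> length w = 2 * n \<and> nN w = n \<and> nE w = n \<and>
     (\<forall>i \<le> length w. nE (take i w) \<le> nN (take i w))"

text \<open>0-based index in the list of the k-th east step (k \<ge> 1).\<close>
definition epos :: "bool list \<Rightarrow> nat \<Rightarrow> nat" where
  "epos w k = (LEAST p. p < length w \<and> \<not> w ! p \<and> nE (take (Suc p) w) = k)"

definition eheight :: "bool list \<Rightarrow> nat \<Rightarrow> nat" where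
  "eheight w k = nN (take (epos w k) w)"

definition colarea :: "nat \<Rightarrow> bool list \<Rightarrow> nat \<Rightarrow> int" where
  "colarea n w k = (if k = n + 1 then -1 else int (eheight w k) - int k)"

text \<open>Valleys: the k-th east step immediately followed by a north step, which is the
  (y_k + 1)-th north step; the valley cell is (k, y_k + 1).\<close>
definition valleys :: "nat \<Rightarrow> bool list \<Rightarrow> (nat \<times> nat) set" where
  "valleys n w = {(k, eheight w k + 1) | k. 1 \<le> k \<and> k \<le> n \<and>
      Suc (epos w k) < length w \<and> w ! Suc (epos w k)}"

text \<open>Billey-Jockusch-Stanley construction: crosses at all valley cells; then columns
  1,...,i processed in order, a column without a cross gets the lowest row (in 1..n)
  not yet containing a cross. bjs_aux n V i gives the rows assigned to columns 1..i.\<close>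
fun bjs_aux :: "nat \<Rightarrow> (nat \<times> nat) set \<Rightarrow> nat \<Rightarrow> nat \<Rightarrow> nat" where
  "bjs_aux n V 0 = (\<lambda>_. 0)"
| "bjs_aux n V (Suc i) =
     (let f = bjs_aux n V i in
      if \<exists>l. (Suc i, l) \<in> V
      then f(Suc i := (THE l. (Suc i, l) \<in> V))
      else f(Suc i := (LEAST r. 1 \<le> r \<and> r \<le> n \<and> r \<notin> snd ` V \<and> r \<notin> f ` {1..i})))"

definition bjs :: "nat \<Rightarrow> bool list \<Rightarrow> nat \<Rightarrow> nat" where
  "bjs n w = bjs_aux n (valleys n w) n"

end

theory Submission
  imports Defs
begin

text \<open>Column \<open>k\<close> has a valley exactly when the \<open>k\<close>-th east step is followed by a north step.
  In that case the BJS cross of column \<open>k\<close> is the valley cell, in row \<open>y\<^sub>k + 1 > k\<close>, and the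
  path rises between the \<open>k\<close>-th and \<open>(k+1)\<close>-st east steps, so \<open>c\<^sub>k\<^sub>+\<^sub>1 \<ge> c\<^sub>k\<close>. Otherwise the
  next step is east (or \<open>k = n\<close>, where \<open>y\<^sub>n = n\<close>), so \<open>c\<^sub>k\<^sub>+\<^sub>1 = c\<^sub>k - 1\<close>; and a valley cross in a row
  \<open>r \<le> k\<close> sits in a column \<open>j < r\<close>, which was processed before \<open>k\<close>, so at most \<open>k - 1\<close> of the rows
  \<open>1..k\<close> are occupied when column \<open>k\<close> is processed and it receives a row \<open>\<le> k\<close>.\<close>

lemma nN_append [simp]: "nN (xs @ ys) = nN xs + nN ys"
  by (simp add: nN_def)

lemma nE_append [simp]: "nE (xs @ ys) = nE xs + nE ys"
  by (simp add: nE_def)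

lemma nE_Nil [simp]: "nE [] = 0"
  by (simp add: nE_def)

lemma nN_take_Suc:
  "p < length w \<Longrightarrow> nN (take (Suc p) w) = nN (take p w) + (if w ! p then 1 else 0)"
  by (simp add: take_Suc_conv_app_nth nN_def)

lemma nE_take_Suc:
  "p < length w \<Longrightarrow> nE (take (Suc p) w) = nE (take p w) + (if w ! p then 0 else 1)"
  by (simp add: take_Suc_conv_app_nth nE_def)

lemma take_append_take_drop: "i \<le> j \<Longrightarrow> take j w = take i w @ take (j - i) (drop i w)"
  by (metis le_add_diff_inverse take_add)

lemma nN_take_mono: "i \<le> j \<Longrightarrow> nN (take i w) \<le> nN (take j w)"
  by (subst take_append_take_drop[of i j]) auto

lemma nE_take_mono: "i \<le> j \<Longrightarrow> nE (take i w) \<le> nE (take j w)"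
  by (subst take_append_take_drop[of i j]) auto

lemma nN_take_le: "nN (take i w) \<le> nN w"
  by (metis append_take_drop_id le_add1 nN_append)

lemma east_step_exists:
  assumes "1 \<le> k" "k \<le> nE w"
  shows "\<exists>p. p < length w \<and> \<not> w ! p \<and> nE (take (Suc p) w) = k"
proof -
  have ex: "\<exists>i. k \<le> nE (take i w)"
    using assms by (intro exI[of _ "length w"]) simp
  define i0 where "i0 = (LEAST i. k \<le> nE (take i w))"
  have reach: "k \<le> nE (take i0 w)"
    unfolding i0_def by (rule LeastI_ex[OF ex])
  have "i0 \<noteq> 0"
    using reach assms by (intro notI) simp
  then obtain p where p: "i0 = Suc p"
    by (cases i0) auto
  have "nE (take p w) < k"
    using not_less_Least[of p "\<lambda>i. k \<le> nE (take i w)"] p i0_def by simp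
  moreover have "p < length w"
  proof (rule ccontr)
    assume "\<not> p < length w"
    then have "take i0 w = take p w"
      using p by simp
    then show False
      using reach \<open>nE (take p w) < k\<close> by simp
  qed
  ultimately show ?thesis
    using reach p nE_take_Suc[of p w] by (intro exI[of _ p]) (auto split: if_splits)
qed

lemma epos:
  assumes "1 \<le> k" "k \<le> nE w"
  shows "epos w k < length w" "\<not> w ! epos w k" "nE (take (Suc (epos w k)) w) = k"
  using LeastI_ex[OF east_step_exists[OF assms]] unfolding epos_def by auto

lemma eheight_eq_nN_take_Suc:
  assumes "1 \<le> k" "k \<le> nE w"
  shows "eheight w k = nN (take (Suc (epos w k)) w)"
  using nN_take_Suc[OF epos(1)[OF assms]] epos(2)[OF assms] by (simp add: eheight_def)

lemma Suc_epos_less_length: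
  assumes "1 \<le> k" "k < nE w"
  shows "Suc (epos w k) < length w"
proof (rule ccontr)
  assume "\<not> ?thesis"
  then have "take (Suc (epos w k)) w = w"
    by simp
  then show False
    using epos(3)[of k w] assms by simp
qed

lemma epos_Suc_if_east:
  assumes "1 \<le> k" "k < nE w" "\<not> w ! Suc (epos w k)"
  shows "epos w (Suc k) = Suc (epos w k)"
  unfolding epos_def[of w "Suc k"]
proof (rule Least_equality)
  let ?p = "epos w k"
  have next_step: "Suc ?p < length w"
    using Suc_epos_less_length assms by blast
  show "Suc ?p < length w \<and> \<not> w ! Suc ?p \<and> nE (take (Suc (Suc ?p)) w) = Suc k"
    using next_step nE_take_Suc[OF next_step] epos(3)[of k w] assms by simp
  fix q
  assume q: "q < length w \<and> \<not> w ! q \<and> nE (take (Suc q) w) = Suc k"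
  show "Suc ?p \<le> q"
  proof (rule ccontr)
    assume "\<not> Suc ?p \<le> q"
    then have "nE (take (Suc q) w) \<le> nE (take (Suc ?p) w)"
      by (intro nE_take_mono) simp
    then show False
      using q epos(3)[of k w] assms by simp
  qed
qed

lemma eheight_Suc_if_east:
  assumes "1 \<le> k" "k < nE w" "\<not> w ! Suc (epos w k)"
  shows "eheight w (Suc k) = eheight w k"
  using eheight_eq_nN_take_Suc[of k w] assms
  by (simp add: eheight_def epos_Suc_if_east)

lemma eheight_Suc_if_north:
  assumes "1 \<le> k" "k < nE w" "w ! Suc (epos w k)"
  shows "eheight w k < eheight w (Suc k)"
proof -
  let ?p = "epos w k" and ?q = "epos w (Suc k)"
  have "Suc ?p < ?q"
  proof (rule ccontr)
    assume "\<not> Suc ?p < ?q"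
    moreover have "?q \<noteq> Suc ?p"
      using epos(2)[of "Suc k" w] assms by auto
    ultimately have "nE (take (Suc ?q) w) \<le> nE (take (Suc ?p) w)"
      by (intro nE_take_mono) simp
    then show False
      using epos(3)[of k w] epos(3)[of "Suc k" w] assms by simp
  qed
  then have "nN (take (Suc (Suc ?p)) w) \<le> eheight w (Suc k)"
    unfolding eheight_def by (intro nN_take_mono) simp
  moreover have "nN (take (Suc (Suc ?p)) w) = Suc (eheight w k)"
    using nN_take_Suc[OF Suc_epos_less_length] eheight_eq_nN_take_Suc[of k w] assms by simp
  ultimately show ?thesis
    by simp
qed

lemma has_valley_iff:
  assumes "1 \<le> k" "k \<le> n"
  shows "(\<exists>l. (k, l) \<in> valleys n w) \<longleftrightarrow> Suc (epos w k) < length w \<and> w ! Suc (epos w k)"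
  using assms by (auto simp: valleys_def)

lemma single_valued_valleys: "single_valued (valleys n w)"
  by (auto simp: valleys_def single_valued_def)

context
  fixes n :: nat and w :: "bool list"
  assumes dyck: "dyck n w"
begin

lemma dyck_nN: "nN w = n" and dyck_nE: "nE w = n"
  and dyck_prefix: "i \<le> length w \<Longrightarrow> nE (take i w) \<le> nN (take i w)"
  using dyck by (auto simp: dyck_def)

lemma dyck_index_le_eheight:
  assumes "1 \<le> k" "k \<le> n"
  shows "k \<le> eheight w k"
  using dyck_prefix[of "Suc (epos w k)"] epos[of k w] eheight_eq_nN_take_Suc[of k w]
    assms dyck_nE by simp

lemma dyck_eheight_last:
  assumes "1 \<le> n"
  shows "eheight w n = n"
  using dyck_index_le_eheight[of n] assms nN_take_le[of "epos w n" w] dyck_nN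
  by (simp add: eheight_def)

lemma dyck_last_east_not_valley:
  assumes "1 \<le> n" "Suc (epos w n) < length w"
  shows "\<not> w ! Suc (epos w n)"
proof
  assume "w ! Suc (epos w n)"
  then have "nN (take (Suc (Suc (epos w n))) w) = Suc n"
    using nN_take_Suc[OF assms(2)] eheight_eq_nN_take_Suc[of n w] dyck_eheight_last
      assms dyck_nE by simp
  then show False
    using nN_take_le[of "Suc (Suc (epos w n))" w] dyck_nN by simp
qed

lemma valleys_above_diagonal: "(j, r) \<in> valleys n w \<Longrightarrow> 1 \<le> j \<and> j < r"
  using dyck_index_le_eheight by (fastforce simp: valleys_def)

lemma colarea_descent_iff_no_valley:
  assumes "1 \<le> k" "k \<le> n"
  shows "colarea n w (k + 1) = colarea n w k - 1 \<longleftrightarrow> \<not> (\<exists>l. (k, l) \<in> valleys n w)"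
proof (cases "k = n")
  case True
  then show ?thesis
    using has_valley_iff dyck_last_east_not_valley dyck_eheight_last assms
    by (simp add: colarea_def)
next
  case False
  then have "k < nE w"
    using assms dyck_nE by simp
  then have "colarea n w (k + 1) - colarea n w k = int (eheight w (Suc k)) - int (eheight w k) - 1"
    using False assms(2) by (simp add: colarea_def)
  then show ?thesis
    using has_valley_iff[OF assms] Suc_epos_less_length[OF assms(1) \<open>k < nE w\<close>]
      eheight_Suc_if_east[OF assms(1) \<open>k < nE w\<close>]
      eheight_Suc_if_north[OF assms(1) \<open>k < nE w\<close>]
    by (cases "w ! Suc (epos w k)") auto
qed

end

lemma bjs_aux_stable: "j \<le> i \<Longrightarrow> bjs_aux n V i j = bjs_aux n V j j"
  by (induction i) (auto simp: Let_def le_Suc_eq)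

lemma bjs_aux_valley:
  assumes "single_valued V" "(k, l) \<in> V" "1 \<le> k"
  shows "bjs_aux n V k k = l"
proof -
  obtain i where "k = Suc i"
    using assms(3) by (cases k) auto
  moreover have "(THE l. (k, l) \<in> V) = l"
    using assms(1,2) by (auto simp: single_valued_def)
  ultimately show ?thesis
    using assms(2) by (auto simp: Let_def)
qed

lemma bjs_aux_le_if_no_valley:
  assumes sv: "single_valued V" and above: "\<And>j r. (j, r) \<in> V \<Longrightarrow> 1 \<le> j \<and> j < r"
    and no_valley: "\<not> (\<exists>l. (Suc i, l) \<in> V)" and "Suc i \<le> n"
  shows "bjs_aux n V (Suc i) (Suc i) \<le> Suc i"
proof -
  let ?f = "bjs_aux n V i"
  have occupied: "{1..Suc i} \<inter> (snd ` V \<union> ?f ` {1..i}) \<subseteq> ?f ` {1..i}"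
  proof
    fix r
    assume r: "r \<in> {1..Suc i} \<inter> (snd ` V \<union> ?f ` {1..i})"
    show "r \<in> ?f ` {1..i}"
    proof (cases "r \<in> snd ` V")
      case True
      then obtain j where j: "(j, r) \<in> V"
        by force
      have "j \<noteq> Suc i"
        using j no_valley by blast
      then have "1 \<le> j" "j \<le> i"
        using above[OF j] r by auto
      moreover have "?f j = r"
        using bjs_aux_stable[OF \<open>j \<le> i\<close>] bjs_aux_valley[OF sv j \<open>1 \<le> j\<close>] by simp
      ultimately show ?thesis
        by force
    next
      case False
      then show ?thesis
        using r by blast
    qed
  qed
  have "card ({1..Suc i} \<inter> (snd ` V \<union> ?f ` {1..i})) \<le> card (?f ` {1..i})"
    by (rule card_mono[OF _ occupied]) simp
  also have "\<dots> \<le> i"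
    using card_image_le[of "{1..i}" ?f] by simp
  finally have "card ({1..Suc i} \<inter> (snd ` V \<union> ?f ` {1..i})) < card {1..Suc i}"
    by simp
  then have "\<not> {1..Suc i} \<subseteq> snd ` V \<union> ?f ` {1..i}"
    by (metis Int_absorb2 less_irrefl)
  then obtain r where r: "r \<in> {1..Suc i}" "r \<notin> snd ` V" "r \<notin> ?f ` {1..i}"
    by blast
  have "bjs_aux n V (Suc i) (Suc i)
      = (LEAST r. 1 \<le> r \<and> r \<le> n \<and> r \<notin> snd ` V \<and> r \<notin> ?f ` {1..i})"
    using no_valley by (simp add: Let_def)
  also have "\<dots> \<le> r"
    using r assms(4) by (intro Least_le) auto
  finally show ?thesis
    using r by simp
qed

lemma bjs_aux_le_iff_no_valley:
  assumes "single_valued V" "\<And>j r. (j, r) \<in> V \<Longrightarrow> 1 \<le> j \<and> j < r" "1 \<le> k" "k \<le> n"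
  shows "bjs_aux n V k k \<le> k \<longleftrightarrow> \<not> (\<exists>l. (k, l) \<in> V)"
proof (cases "\<exists>l. (k, l) \<in> V")
  case True
  then obtain l where "(k, l) \<in> V"
    by blast
  then show ?thesis
    using bjs_aux_valley assms by fastforce
next
  case False
  obtain i where "k = Suc i"
    using assms(3) by (cases k) auto
  then show ?thesis
    using bjs_aux_le_if_no_valley[OF assms(1,2)] False assms(4) by simp
qed

theorem mainTheorem3:
  fixes n :: nat and w :: "bool list" and k :: nat
  assumes "dyck n w"
    and "1 \<le> k" and "k \<le> n"
  shows "colarea n w (k + 1) = colarea n w k - 1 \<longleftrightarrow> bjs n w k \<le> k"
proof -
  have "bjs n w k = bjs_aux n (valleys n w) k k"
    unfolding bjs_def using bjs_aux_stable assms(3) .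
  moreover have "bjs_aux n (valleys n w) k k \<le> k \<longleftrightarrow> \<not> (\<exists>l. (k, l) \<in> valleys n w)"
    using bjs_aux_le_iff_no_valley single_valued_valleys valleys_above_diagonal assms by blast
  ultimately show ?thesis
    using colarea_descent_iff_no_valley[OF assms] by simp
qed

end
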